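(* Let $p\in[0,1]$ satisfy $p\ge_T\emptyset'$. Then there is $y\notin\mathsf{MLR}_{\mu_p}$ and a constant $c$ such that $\mathit{KA}(y\upharpoonright n)\ge-\log\mu_p(y\upharpoonright n)-c$ for all $n$.
   Context: For $p\in[0,1]$ the Bernoulli measure $\mu_p$ on $2^\omega$ is determined by $\mu_p(\sigma)=p^{\#_0(\sigma)}(1-p)^{\#_1(\sigma)}$, where $\#_i(\sigma)$ is the number of occurrences of $i$ in $\sigma$; $p$ is identified with its binary expansion. $\mathsf{MLR}_{\mu_p}$ is the set of sequences Martin-Löf random for $\mu_p$ relative to oracle $p$. A semimeasure is $\rho:2^{<\omega}\to[0,1]$ with $\rho(\emptyset)\le1$ and $\rho(\sigma)\ge\rho(\sigma0)+\rho(\sigma1)$; it is left-c.e. if its values are uniformly limits of computable nondecreasing sequences of rationals. $M$ is a universal left-c.e. semimeasure (for every left-c.e. semimeasure $\rho$ there is $c>0$ with $M\ge c\rho$), and the a priori complexity is $\mathit{KA}(\sigma)=-\log M(\sigma)$ (unrelativized). $y\upharpoonright n$ is the length-$n$ prefix of $y$. *)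

theory Defs
  imports Complex_Main "HOL-Library.Nat_Bijection"
begin

datatype recf =
    Zer
  | Suc_f
  | Proj nat
  | Orc
  | Cn recf "recf list"
  | Pr recf recf
  | Mn recf

inductive ev :: "(nat \<Rightarrow> bool) \<Rightarrow> recf \<Rightarrow> nat list \<Rightarrow> nat \<Rightarrow> bool"
  for A :: "nat \<Rightarrow> bool" where
  ev_zer: "ev A Zer xs 0"
| ev_suc: "ev A Suc_f (x # xs) (Suc x)"
| ev_proj: "i < length xs \<Longrightarrow> ev A (Proj i) xs (xs ! i)"
| ev_orc: "ev A Orc (x # xs) (if A x then 1 else 0)"
| ev_cn: "list_all2 (\<lambda>g y. ev A g xs y) gs ys \<Longrightarrow> ev A f ys r \<Longrightarrow> ev A (Cn f gs) xs r"
| ev_pr0: "ev A f xs r \<Longrightarrow> ev A (Pr f g) (0 # xs) r"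
| ev_prS: "ev A (Pr f g) (n # xs) r \<Longrightarrow> ev A g (n # r # xs) r'
           \<Longrightarrow> ev A (Pr f g) (Suc n # xs) r'"
| ev_mn: "ev A f (n # xs) 0 \<Longrightarrow> (\<forall>m<n. \<exists>v. 0 < v \<and> ev A f (m # xs) v)
           \<Longrightarrow> ev A (Mn f) xs n"

definition computable_in :: "(nat \<Rightarrow> bool) \<Rightarrow> (nat \<Rightarrow> nat) \<Rightarrow> bool" where
  "computable_in A f \<longleftrightarrow> (\<exists>c. \<forall>x. ev A c [x] (f x))"

definition turing_le :: "(nat \<Rightarrow> bool) \<Rightarrow> (nat \<Rightarrow> bool) \<Rightarrow> bool" where
  "turing_le B A \<longleftrightarrow> computable_in A (\<lambda>x. if B x then 1 else 0)"

definition ce_in :: "(nat \<Rightarrow> bool) \<Rightarrow> nat set \<Rightarrow> bool" where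
  "ce_in A S \<longleftrightarrow> (\<exists>c. \<forall>x. x \<in> S \<longleftrightarrow> (\<exists>r. ev A c [x] r))"

fun encode :: "recf \<Rightarrow> nat" where
  "encode Zer = prod_encode (0, 0)"
| "encode Suc_f = prod_encode (1, 0)"
| "encode (Proj i) = prod_encode (2, i)"
| "encode Orc = prod_encode (3, 0)"
| "encode (Cn f gs) = prod_encode (4, prod_encode (encode f, list_encode (map encode gs)))"
| "encode (Pr f g) = prod_encode (5, prod_encode (encode f, encode g))"
| "encode (Mn f) = prod_encode (6, encode f)"

text \<open>The halting problem \<emptyset>' (unrelativized: empty oracle).\<close>
definition halting :: "nat \<Rightarrow> bool" where
  "halting e \<longleftrightarrow> (\<exists>c. encode c = e \<and> (\<exists>r. ev (\<lambda>_. False) c [e] r))"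

type_synonym bstring = "bool list"   \<comment> \<open>False = 0, True = 1\<close>

definition prefix :: "(nat \<Rightarrow> bool) \<Rightarrow> nat \<Rightarrow> bstring" where
  "prefix y n = map y [0..<n]"

definition code_str :: "bstring \<Rightarrow> nat" where
  "code_str \<sigma> = list_encode (map (\<lambda>b. if b then 1 else 0) \<sigma>)"

text \<open>Binary expansion of a real p in [0,1]: bit n is the (n+1)-st binary digit.\<close>
definition pbits :: "real \<Rightarrow> nat \<Rightarrow> bool" where
  "pbits p n = odd \<lfloor>p * 2 ^ (Suc n)\<rfloor>"

definition mu :: "real \<Rightarrow> bstring \<Rightarrow> real" where
  "mu p \<sigma> = p ^ length (filter Not \<sigma>) * (1 - p) ^ length (filter id \<sigma>)"

definition prefix_free :: "bstring set \<Rightarrow> bool" where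
  "prefix_free F \<longleftrightarrow> (\<forall>\<sigma>\<in>F. \<forall>\<tau>\<in>F. \<sigma> \<noteq> \<tau> \<longrightarrow> \<not> (\<exists>\<rho>. \<tau> = \<sigma> @ \<rho>))"

text \<open>mu_p of the open set generated by U is at most r: the measure of [U] is the
  sum of mu_p over the (prefix-free) minimal elements of U, i.e. the supremum of sums
  over finite prefix-free subsets of U.\<close>
definition open_measure_le :: "real \<Rightarrow> bstring set \<Rightarrow> real \<Rightarrow> bool" where
  "open_measure_le p U r \<longleftrightarrow>
     (\<forall>F. finite F \<longrightarrow> F \<subseteq> U \<longrightarrow> prefix_free F \<longrightarrow> (\<Sum>\<sigma>\<in>F. mu p \<sigma>) \<le> r)"

definition martin_loef_test :: "real \<Rightarrow> (nat \<Rightarrow> bstring set) \<Rightarrow> bool" where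
  "martin_loef_test p U \<longleftrightarrow>
     ce_in (pbits p) {prod_encode (k, code_str \<sigma>) | k \<sigma>. \<sigma> \<in> U k} \<and>
     (\<forall>k. open_measure_le p (U k) ((1/2) ^ k))"

definition mlr :: "real \<Rightarrow> (nat \<Rightarrow> bool) set" where
  "mlr p = {y. \<not> (\<exists>U. martin_loef_test p U \<and> (\<forall>k. \<exists>n. prefix y n \<in> U k))}"

definition semimeasure :: "(bstring \<Rightarrow> real) \<Rightarrow> bool" where
  "semimeasure \<rho> \<longleftrightarrow> (\<forall>\<sigma>. 0 \<le> \<rho> \<sigma> \<and> \<rho> \<sigma> \<le> 1) \<and> \<rho> [] \<le> 1 \<and>
     (\<forall>\<sigma>. \<rho> (\<sigma> @ [False]) + \<rho> (\<sigma> @ [True]) \<le> \<rho> \<sigma>)"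

text \<open>The rational q(sigma,s) is
  (a x - b x) / (d x + 1) for x = <code sigma, s> and computable a, b, d.\<close>
definition left_ce :: "(bstring \<Rightarrow> real) \<Rightarrow> bool" where
  "left_ce \<rho> \<longleftrightarrow> (\<exists>a b d.
     computable_in (\<lambda>_. False) a \<and> computable_in (\<lambda>_. False) b \<and>
     computable_in (\<lambda>_. False) d \<and>
     (\<forall>\<sigma>. let q = (\<lambda>s. (real (a (prod_encode (code_str \<sigma>, s))) - real (b (prod_encode (code_str \<sigma>, s))))
                      / real (Suc (d (prod_encode (code_str \<sigma>, s))))) in
           incseq q \<and> q \<longlonglongrightarrow> \<rho> \<sigma>))"

definition left_ce_semimeasure :: "(bstring \<Rightarrow> real) \<Rightarrow> bool" where
  "left_ce_semimeasure \<rho> \<longleftrightarrow> semimeasure \<rho> \<and> left_ce \<rho>"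

definition universal_semimeasure :: "(bstring \<Rightarrow> real) \<Rightarrow> bool" where
  "universal_semimeasure M \<longleftrightarrow> left_ce_semimeasure M \<and>
     (\<forall>\<rho>. left_ce_semimeasure \<rho> \<longrightarrow> (\<exists>c>0. \<forall>\<sigma>. M \<sigma> \<ge> c * \<rho> \<sigma>))"

definition KA :: "(bstring \<Rightarrow> real) \<Rightarrow> bstring \<Rightarrow> real" where
  "KA M \<sigma> = - log 2 (M \<sigma>)"

end

theory Submission
  imports Defs
begin

text \<open>If \<open>p \<in> {0, 1}\<close> the oracle \<open>p\<close> is computable, so \<open>\<emptyset>'\<close> would be decidable; hence
  \<open>0 < p < 1\<close>. Since \<open>M\<close> is left-c.e., the relation \<open>N / 2 ^ E < M \<sigma>\<close> is c.e. and thus decided by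
  \<open>\<emptyset>' \<le>\<^sub>T p\<close>. So \<open>p\<close> computes the greedy sequence \<open>y\<close>: keep a budget \<open>t\<^sub>n \<ge> M (y\<restriction>n)\<close>,
  let the next bit be \<open>1\<close> iff \<open>M (y\<restriction>n 0)\<close> exceeds \<open>t\<^sub>n\<close> times a dyadic upper approximation
  of \<open>p\<close> (within \<open>2\<^sup>-\<^sup>n\<close>), and multiply the budget by the approximation for the chosen bit. The
  semimeasure inequality preserves \<open>M (y\<restriction>n) \<le> t\<^sub>n\<close>, and since the errors \<open>2\<^sup>-\<^sup>n\<close> are summable,
  \<open>t\<^sub>n \<le> e\<^bsup>2 / min p (1 - p)\<^esup> \<mu>\<^sub>p (y\<restriction>n)\<close>, which is the complexity bound. Being \<open>p\<close>-computable,
  \<open>y\<close> is captured by the \<open>\<mu>\<^sub>p\<close>-Martin-L\<ouml>f test \<open>U\<^sub>k = {y\<restriction>(m k)}\<close>.\<close>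

section \<open>Partial recursive functions relative to an oracle\<close>

lemma ev_deterministic: "ev A c xs r \<Longrightarrow> ev A c xs r' \<Longrightarrow> r = r'"
proof (induction arbitrary: r' rule: ev.induct)
  case (ev_cn xs gs ys f r)
  from ev_cn.prems obtain ys' where ys': "list_all2 (\<lambda>g y. ev A g xs y) gs ys'" "ev A f ys' r'"
    by (cases rule: ev.cases) auto
  have "ys = ys'" using ev_cn.IH(1) ys'(1)
    by (induction gs arbitrary: ys ys') (auto simp: list_all2_Cons1)
  then show ?case using ev_cn ys' by auto
next
  case (ev_prS f g n xs r r2)
  from ev_prS.prems obtain r3 where "ev A (Pr f g) (n # xs) r3" "ev A g (n # r3 # xs) r'"
    by (cases rule: ev.cases) auto
  then show ?case using ev_prS.IH by auto
next
  case (ev_pr0 f xs r)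
  from ev_pr0.prems have "ev A f xs r'" by (cases rule: ev.cases) auto
  then show ?case using ev_pr0.IH by auto
next
  case (ev_mn f n xs)
  from ev_mn.prems obtain n' where n': "ev A f (n' # xs) 0" "\<forall>m<n'. \<exists>v>0. ev A f (m # xs) v" "r' = n'"
    by (cases rule: ev.cases) auto
  have "\<not> n < n'" using n'(2) ev_mn.IH(1) by force
  moreover have "\<not> n' < n" using n'(1) ev_mn.IH(2) by force
  ultimately show ?case using n'(3) by simp
qed (auto elim: ev.cases)

lemma ev_Cn_iff: "ev A (Cn f gs) xs r \<longleftrightarrow> (\<exists>ys. list_all2 (\<lambda>g y. ev A g xs y) gs ys \<and> ev A f ys r)"
  by (auto elim: ev.cases intro: ev.intros)

lemma ev_Mn_iff: "ev A (Mn f) xs n \<longleftrightarrow> ev A f (n # xs) 0 \<and> (\<forall>m<n. \<exists>v>0. ev A f (m # xs) v)"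
  by (auto elim: ev.cases intro: ev.intros)

lemma ev_Proj_iff: "ev A (Proj i) xs r \<longleftrightarrow> i < length xs \<and> r = xs ! i"
  by (auto elim: ev.cases intro: ev.intros)

lemma ev_Mn_total_iff:
  assumes total: "\<And>s. ev A f (s # xs) (g s)"
  shows "(\<exists>r. ev A (Mn f) xs r) \<longleftrightarrow> (\<exists>s. g s = 0)"
proof
  assume "\<exists>r. ev A (Mn f) xs r"
  then obtain r where "ev A f (r # xs) 0" by (auto simp: ev_Mn_iff)
  then have "g r = 0" using total ev_deterministic by metis
  then show "\<exists>s. g s = 0" ..
next
  assume ex: "\<exists>s. g s = 0"
  define n where "n = (LEAST s. g s = 0)"
  have "g n = 0" unfolding n_def using ex by (rule LeastI_ex)
  moreover have "\<forall>m<n. g m \<noteq> 0" unfolding n_def using not_less_Least by blast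
  ultimately have "ev A (Mn f) xs n"
    unfolding ev_Mn_iff using total by (metis neq0_conv)
  then show "\<exists>r. ev A (Mn f) xs r" ..
qed

fun const_code :: "nat \<Rightarrow> recf" where
  "const_code 0 = Zer"
| "const_code (Suc n) = Cn Suc_f [const_code n]"

lemma ev_const_code: "ev A (const_code n) xs n"
  by (induction n) (auto intro: ev.intros)

definition rec_computable :: "(nat \<Rightarrow> bool) \<Rightarrow> nat \<Rightarrow> (nat list \<Rightarrow> nat) \<Rightarrow> bool" where
  "rec_computable A k f \<longleftrightarrow> (\<exists>c. \<forall>xs. length xs = k \<longrightarrow> ev A c xs (f xs))"

lemma rec_computable_cong:
  "rec_computable A k f \<Longrightarrow> (\<And>xs. length xs = k \<Longrightarrow> f xs = g xs) \<Longrightarrow> rec_computable A k g"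
  unfolding rec_computable_def by metis

lemma computable_in_iff_rec_computable: "computable_in A f \<longleftrightarrow> rec_computable A 1 (\<lambda>xs. f (xs!0))"
  unfolding computable_in_def rec_computable_def
  apply auto
  subgoal for c by (intro exI[of _ c]) (auto simp: length_Suc_conv)
  subgoal for c by (intro exI[of _ c]) (metis One_nat_def length_Cons list.size(3) nth_Cons_0)
  done

lemma rec_computable_const [intro]: "rec_computable A k (\<lambda>_. n)"
  unfolding rec_computable_def using ev_const_code by blast

lemma rec_computable_proj [intro]: "i < k \<Longrightarrow> rec_computable A k (\<lambda>xs. xs ! i)"
  unfolding rec_computable_def by (auto intro: ev.intros)

lemma rec_computable_oracle: "rec_computable A 1 (\<lambda>xs. if A (xs!0) then 1 else 0)"
  unfolding rec_computable_def
  apply (intro exI[of _ Orc] allI impI)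
  subgoal for xs using ev_orc[of A "xs!0" "[]"] by (cases xs) auto
  done

lemma rec_computable_Suc_base: "rec_computable A 1 (\<lambda>xs. Suc (xs!0))"
  unfolding rec_computable_def
  by (intro exI[of _ Suc_f] allI impI) (auto simp: length_Suc_conv intro: ev_suc)

lemma rec_computable_compose:
  assumes f: "rec_computable A (length gs) f" and gs: "\<forall>g\<in>set gs. rec_computable A k g"
  shows "rec_computable A k (\<lambda>xs. f (map (\<lambda>g. g xs) gs))"
proof -
  have "\<exists>cs. \<forall>xs. length xs = k \<longrightarrow> list_all2 (\<lambda>c v. ev A c xs v) cs (map (\<lambda>g. g xs) gs)"
    using gs
  proof (induction gs)
    case (Cons g gs)
    then obtain cs where "\<forall>xs. length xs = k \<longrightarrow> list_all2 (\<lambda>c v. ev A c xs v) cs (map (\<lambda>g. g xs) gs)"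
      by auto
    moreover from Cons obtain c where "\<forall>xs. length xs = k \<longrightarrow> ev A c xs (g xs)"
      unfolding rec_computable_def by auto
    ultimately show ?case by (intro exI[of _ "c # cs"]) auto
  qed simp
  then obtain cs where cs: "\<forall>xs. length xs = k \<longrightarrow> list_all2 (\<lambda>c v. ev A c xs v) cs (map (\<lambda>g. g xs) gs)"
    by blast
  from f obtain c where c: "\<forall>ys. length ys = length gs \<longrightarrow> ev A c ys (f ys)"
    unfolding rec_computable_def by auto
  show ?thesis unfolding rec_computable_def
    by (rule exI[of _ "Cn c cs"]) (auto intro!: ev_cn cs[rule_format] c[rule_format])
qed

lemma rec_computable_compose1:
  "rec_computable A 1 (\<lambda>xs. g (xs!0)) \<Longrightarrow> rec_computable A k f1 \<Longrightarrow> rec_computable A k (\<lambda>xs. g (f1 xs))"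
  using rec_computable_compose[of A "[f1]" "\<lambda>xs. g (xs!0)" k] by auto

lemma rec_computable_compose2:
  "rec_computable A 2 (\<lambda>xs. g (xs!0) (xs!1)) \<Longrightarrow> rec_computable A k f1 \<Longrightarrow> rec_computable A k f2 \<Longrightarrow>
   rec_computable A k (\<lambda>xs. g (f1 xs) (f2 xs))"
  using rec_computable_compose[of A "[f1, f2]" "\<lambda>xs. g (xs!0) (xs!1)" k] by (auto simp: numeral_2_eq_2)

lemma rec_computable_compose3:
  "rec_computable A 3 (\<lambda>xs. g (xs!0) (xs!1) (xs!2)) \<Longrightarrow> rec_computable A k f1 \<Longrightarrow>
   rec_computable A k f2 \<Longrightarrow> rec_computable A k f3 \<Longrightarrow> rec_computable A k (\<lambda>xs. g (f1 xs) (f2 xs) (f3 xs))"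
  using rec_computable_compose[of A "[f1, f2, f3]" "\<lambda>xs. g (xs!0) (xs!1) (xs!2)" k]
  by (auto simp: numeral_3_eq_3)

lemma rec_computable_computable_in:
  "computable_in A f \<Longrightarrow> rec_computable A k g \<Longrightarrow> rec_computable A k (\<lambda>xs. f (g xs))"
  unfolding computable_in_iff_rec_computable by (rule rec_computable_compose1)

lemma rec_computable_Suc: "rec_computable A k f \<Longrightarrow> rec_computable A k (\<lambda>xs. Suc (f xs))"
  by (rule rec_computable_compose1[OF rec_computable_Suc_base])

lemma ev_Pr_rec_nat:
  assumes "\<forall>xs. length xs = k \<longrightarrow> ev A cg xs (g xs)"
    and "\<forall>xs. length xs = Suc (Suc k) \<longrightarrow> ev A ch xs (h xs)" and "length xs = k"
  shows "ev A (Pr cg ch) (n # xs) (rec_nat (g xs) (\<lambda>m r. h (m # r # xs)) n)"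
  using assms by (induction n) (auto intro: ev.intros)

lemma rec_computable_rec_nat:
  assumes g: "rec_computable A k g"
    and h: "rec_computable A (Suc (Suc k)) (\<lambda>ys. h (ys!0) (ys!1) (drop 2 ys))"
    and f: "rec_computable A k f"
  shows "rec_computable A k (\<lambda>xs. rec_nat (g xs) (\<lambda>m r. h m r xs) (f xs))"
proof -
  from g h obtain cg ch where "\<forall>xs. length xs = k \<longrightarrow> ev A cg xs (g xs)"
    "\<forall>ys. length ys = Suc (Suc k) \<longrightarrow> ev A ch ys (h (ys!0) (ys!1) (drop 2 ys))"
    unfolding rec_computable_def by blast
  then have "\<forall>ys. length ys = Suc k \<longrightarrow>
      ev A (Pr cg ch) ys (rec_nat (g (tl ys)) (\<lambda>m r. h m r (tl ys)) (hd ys))"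
    by (auto simp: length_Suc_conv intro!: ev_Pr_rec_nat[where h = "\<lambda>ys. h (ys!0) (ys!1) (drop 2 ys)",
          simplified])
  then have pr: "rec_computable A (Suc k) (\<lambda>ys. rec_nat (g (tl ys)) (\<lambda>m r. h m r (tl ys)) (hd ys))"
    unfolding rec_computable_def by blast
  have "rec_computable A k (\<lambda>xs. (\<lambda>ys. rec_nat (g (tl ys)) (\<lambda>m r. h m r (tl ys)) (hd ys))
           (map (\<lambda>g. g xs) (f # map (\<lambda>i xs. xs!i) [0..<k])))"
    by (rule rec_computable_compose) (use pr f in auto)
  then show ?thesis
    by (rule rec_computable_cong) (simp add: o_def, metis map_nth)
qed

lemma rec_computable_minimize:
  assumes f: "rec_computable A (Suc k) f" and ex: "\<And>xs. length xs = k \<Longrightarrow> \<exists>n. f (n # xs) = 0"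
  shows "rec_computable A k (\<lambda>xs. LEAST n. f (n # xs) = 0)"
proof -
  from f obtain c where c: "\<And>xs. length xs = Suc k \<Longrightarrow> ev A c xs (f xs)"
    unfolding rec_computable_def by blast
  have "ev A (Mn c) xs (LEAST n. f (n # xs) = 0)" if "length xs = k" for xs
  proof -
    have "f ((LEAST n. f (n # xs) = 0) # xs) = 0" using ex[OF that] by (rule LeastI_ex)
    moreover have "\<forall>m<(LEAST n. f (n # xs) = 0). f (m # xs) \<noteq> 0" using not_less_Least by blast
    ultimately show ?thesis unfolding ev_Mn_iff using c that by (metis length_Cons neq0_conv)
  qed
  then show ?thesis unfolding rec_computable_def by blast
qed

lemma rec_computable_add:
  "rec_computable A k f \<Longrightarrow> rec_computable A k g \<Longrightarrow> rec_computable A k (\<lambda>xs. f xs + g xs)"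
proof (rule rec_computable_compose2[of A "(+)"])
  have "rec_computable A 2 (\<lambda>xs. rec_nat (xs!1) (\<lambda>m r. (\<lambda>m r xs. Suc r) m r xs) (xs!0))"
    by (intro rec_computable_rec_nat rec_computable_Suc rec_computable_proj) auto
  moreover have "rec_nat x (\<lambda>m r. Suc r) n = n + x" for x n :: nat by (induction n) auto
  ultimately show "rec_computable A 2 (\<lambda>xs. xs!0 + xs!1)" by simp
qed

lemma rec_computable_mult:
  "rec_computable A k f \<Longrightarrow> rec_computable A k g \<Longrightarrow> rec_computable A k (\<lambda>xs. f xs * g xs)"
proof (rule rec_computable_compose2[of A "(*)"])
  have "rec_computable A 4 (\<lambda>ys. ys!1 + drop 2 ys ! 1)"
    by (rule rec_computable_cong[of _ _ "\<lambda>ys. ys!1 + ys!3"])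
      (intro rec_computable_add rec_computable_proj, auto)
  then have "rec_computable A 2 (\<lambda>xs. rec_nat 0 (\<lambda>m r. (\<lambda>m r xs. r + xs!1) m r xs) (xs!0))"
    by (intro rec_computable_rec_nat) (auto simp: numeral_eq_Suc)
  moreover have "rec_nat 0 (\<lambda>m r. r + x) n = n * x" for x n :: nat by (induction n) auto
  ultimately show "rec_computable A 2 (\<lambda>xs. xs!0 * xs!1)" by simp
qed

lemma rec_computable_diff:
  "rec_computable A k f \<Longrightarrow> rec_computable A k g \<Longrightarrow> rec_computable A k (\<lambda>xs. f xs - g xs)"
proof (rule rec_computable_compose2[of A "(-)"])
  have "rec_computable A 1 (\<lambda>xs. rec_nat 0 (\<lambda>m r. (\<lambda>m r xs. m) m r xs) (xs!0))"
    by (rule rec_computable_rec_nat) auto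
  moreover have "rec_nat 0 (\<lambda>m r. m) n = n - 1" for n :: nat by (induction n) auto
  ultimately have "rec_computable A 1 (\<lambda>xs. xs!0 - 1)" by simp
  then have "rec_computable A 4 (\<lambda>ys. ys!1 - 1)"
    by (rule rec_computable_compose1) auto
  then have "rec_computable A 2 (\<lambda>xs. rec_nat (xs!0) (\<lambda>m r. (\<lambda>m r xs. r - 1) m r xs) (xs!1))"
    by (intro rec_computable_rec_nat) (auto simp: numeral_eq_Suc)
  moreover have "rec_nat x (\<lambda>m r. r - 1) n = x - n" for x n :: nat by (induction n) auto
  ultimately show "rec_computable A 2 (\<lambda>xs. xs!0 - xs!1)" by simp
qed

definition rec_decidable :: "(nat \<Rightarrow> bool) \<Rightarrow> nat \<Rightarrow> (nat list \<Rightarrow> bool) \<Rightarrow> bool" where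
  "rec_decidable A k P \<longleftrightarrow> rec_computable A k (\<lambda>xs. if P xs then 1 else 0)"

lemma rec_computable_If:
  assumes "rec_decidable A k P" "rec_computable A k f" "rec_computable A k g"
  shows "rec_computable A k (\<lambda>xs. if P xs then f xs else g xs)"
proof -
  have "rec_computable A k (\<lambda>xs. (if P xs then 1 else 0) * f xs + (1 - (if P xs then 1 else 0)) * g xs)"
    using assms unfolding rec_decidable_def
    by (intro rec_computable_add rec_computable_mult rec_computable_diff rec_computable_const)
  then show ?thesis by (rule rec_computable_cong) auto
qed

lemma rec_decidable_less:
  assumes "rec_computable A k f" "rec_computable A k g"
  shows "rec_decidable A k (\<lambda>xs. f xs < g xs)"
proof -
  have "rec_computable A k (\<lambda>xs. 1 - (1 - (g xs - f xs)))"
    using assms by (intro rec_computable_diff rec_computable_const)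
  then show ?thesis unfolding rec_decidable_def by (rule rec_computable_cong) auto
qed

lemma rec_decidable_eq:
  assumes "rec_computable A k f" "rec_computable A k g"
  shows "rec_decidable A k (\<lambda>xs. f xs = g xs)"
proof -
  have "rec_computable A k (\<lambda>xs. 1 - ((f xs - g xs) + (g xs - f xs)))"
    using assms by (intro rec_computable_diff rec_computable_add rec_computable_const)
  then show ?thesis unfolding rec_decidable_def by (rule rec_computable_cong) auto
qed

lemma rec_computable_Least:
  assumes P: "rec_decidable A (Suc k) P" and ex: "\<And>xs. length xs = k \<Longrightarrow> \<exists>n. P (n # xs)"
  shows "rec_computable A k (\<lambda>xs. LEAST n. P (n # xs))"
proof -
  have "rec_computable A (Suc k) (\<lambda>xs. if P xs then 0 else 1)"
    using P by (intro rec_computable_If rec_computable_const)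
  then have "rec_computable A k (\<lambda>xs. LEAST n. (if P (n # xs) then 0 else 1) = (0::nat))"
    by (rule rec_computable_minimize) (use ex in auto)
  then show ?thesis by (rule rec_computable_cong) simp
qed

lemma rec_computable_div2: "rec_computable A k f \<Longrightarrow> rec_computable A k (\<lambda>xs. f xs div 2)"
proof (rule rec_computable_compose1[of A "\<lambda>x. x div 2"])
  have "rec_computable A 1 (\<lambda>xs. LEAST m. (m # xs)!1 < 2 * (m # xs)!0 + 2)"
  proof (rule rec_computable_Least[of A 1 "\<lambda>ys. ys!1 < 2 * ys!0 + 2"])
    show "rec_decidable A (Suc 1) (\<lambda>ys. ys!1 < 2 * ys!0 + 2)"
      by (intro rec_decidable_less rec_computable_add rec_computable_mult rec_computable_proj
          rec_computable_const) auto
    show "\<exists>m. (m # xs)!1 < 2 * (m # xs)!0 + 2" for xs :: "nat list"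
      by (intro exI[of _ "xs!0"]) simp
  qed
  moreover have "(LEAST m. n < 2 * m + 2) = n div (2::nat)" for n
    by (rule Least_equality) auto
  ultimately show "rec_computable A 1 (\<lambda>xs. xs!0 div 2)" by simp
qed

lemma rec_computable_triangle: "rec_computable A k f \<Longrightarrow> rec_computable A k (\<lambda>xs. triangle (f xs))"
  unfolding triangle_def by (intro rec_computable_div2 rec_computable_mult rec_computable_Suc)

lemma rec_computable_prod_encode:
  "rec_computable A k f \<Longrightarrow> rec_computable A k g \<Longrightarrow> rec_computable A k (\<lambda>xs. prod_encode (f xs, g xs))"
  unfolding prod_encode_def by (simp, intro rec_computable_add rec_computable_triangle)

definition triangle_root :: "nat \<Rightarrow> nat" where
  "triangle_root z = (LEAST k. z < triangle (Suc k))"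

lemma triangle_root_exists: "\<exists>k. z < triangle (Suc k)"
proof -
  have "z \<le> triangle z" by (induction z) auto
  then show ?thesis by (intro exI[of _ z]) auto
qed

lemma triangle_root_bounds: "triangle (triangle_root z) \<le> z" "z < triangle (Suc (triangle_root z))"
proof -
  show "z < triangle (Suc (triangle_root z))"
    unfolding triangle_root_def using triangle_root_exists by (rule LeastI_ex)
  show "triangle (triangle_root z) \<le> z"
  proof (cases "triangle_root z")
    case (Suc k)
    then have "\<not> z < triangle (Suc k)"
      unfolding triangle_root_def by (metis lessI not_less_Least)
    then show ?thesis using Suc by simp
  qed simp
qed

lemma prod_decode_triangle_root:
  "prod_decode z = (z - triangle (triangle_root z), triangle_root z - (z - triangle (triangle_root z)))"
proof -
  define k where "k = triangle_root z"
  define m where "m = z - triangle k"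
  have z: "z = triangle k + m" "m \<le> k" using triangle_root_bounds[of z] unfolding k_def m_def by auto
  have "prod_decode z = prod_decode_aux k m" using z(1) by (simp add: prod_decode_triangle_add)
  also have "\<dots> = (m, k - m)" using z(2) by (simp add: prod_decode_aux.simps)
  finally show ?thesis unfolding m_def k_def .
qed

lemma rec_computable_triangle_root:
  "rec_computable A k f \<Longrightarrow> rec_computable A k (\<lambda>xs. triangle_root (f xs))"
proof (rule rec_computable_compose1[of A triangle_root])
  have "rec_computable A 1 (\<lambda>xs. LEAST k. (k # xs)!1 < triangle (Suc ((k # xs)!0)))"
  proof (rule rec_computable_Least[of A 1 "\<lambda>ys. ys!1 < triangle (Suc (ys!0))"])
    show "rec_decidable A (Suc 1) (\<lambda>ys. ys!1 < triangle (Suc (ys!0)))"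
      by (intro rec_decidable_less rec_computable_triangle rec_computable_Suc rec_computable_proj) auto
    show "\<exists>k. (k # xs)!1 < triangle (Suc ((k # xs)!0))" for xs :: "nat list"
      using triangle_root_exists by simp
  qed
  then show "rec_computable A 1 (\<lambda>xs. triangle_root (xs!0))" by (simp add: triangle_root_def)
qed

lemma rec_computable_fst_prod_decode:
  "rec_computable A k f \<Longrightarrow> rec_computable A k (\<lambda>xs. fst (prod_decode (f xs)))"
  unfolding prod_decode_triangle_root
  by (simp, intro rec_computable_diff rec_computable_triangle rec_computable_triangle_root)

lemma rec_computable_snd_prod_decode:
  "rec_computable A k f \<Longrightarrow> rec_computable A k (\<lambda>xs. snd (prod_decode (f xs)))"
  unfolding prod_decode_triangle_root
  by (simp, intro rec_computable_diff rec_computable_triangle rec_computable_triangle_root)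

lemma rec_computable_power2: "rec_computable A k f \<Longrightarrow> rec_computable A k (\<lambda>xs. 2 ^ f xs)"
proof -
  assume f: "rec_computable A k f"
  have "rec_computable A k (\<lambda>xs. rec_nat 1 (\<lambda>m r. (\<lambda>m r xs. r * 2) m r xs) (f xs))"
    by (rule rec_computable_rec_nat[OF rec_computable_const _ f])
      (intro rec_computable_mult rec_computable_proj rec_computable_const, simp)
  moreover have "rec_nat (Suc 0) (\<lambda>m r. r * 2) n = 2 ^ n" for n :: nat by (induction n) auto
  ultimately show ?thesis by simp
qed

definition list_code_hd :: "nat \<Rightarrow> nat" where
  "list_code_hd x = fst (prod_decode (x - 1))"

definition list_code_tl :: "nat \<Rightarrow> nat" where
  "list_code_tl x = snd (prod_decode (x - 1))"

lemma list_code_hd_Cons: "list_code_hd (list_encode (a # l)) = a"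
  by (simp add: list_code_hd_def)

lemma list_code_tl_Cons: "list_code_tl (list_encode (a # l)) = list_encode l"
  by (simp add: list_code_tl_def)

lemma rec_computable_list_code_hd: "rec_computable A k f \<Longrightarrow> rec_computable A k (\<lambda>xs. list_code_hd (f xs))"
  unfolding list_code_hd_def by (intro rec_computable_fst_prod_decode rec_computable_diff rec_computable_const)

lemma rec_computable_list_code_tl: "rec_computable A k f \<Longrightarrow> rec_computable A k (\<lambda>xs. list_code_tl (f xs))"
  unfolding list_code_tl_def by (intro rec_computable_snd_prod_decode rec_computable_diff rec_computable_const)

definition list_code_rev_step :: "nat \<Rightarrow> nat" where
  "list_code_rev_step r = (if fst (prod_decode r) = 0 then r
     else prod_encode (list_code_tl (fst (prod_decode r)),
                       Suc (prod_encode (list_code_hd (fst (prod_decode r)), snd (prod_decode r)))))"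

definition list_code_rev :: "nat \<Rightarrow> nat" where
  "list_code_rev x = snd (prod_decode ((list_code_rev_step ^^ x) (prod_encode (x, 0))))"

lemma length_le_list_encode: "length l \<le> list_encode l"
proof (induction l)
  case (Cons a l)
  have "list_encode l \<le> prod_encode (a, list_encode l)"
    using le_prod_encode_2 .
  then show ?case using Cons by simp
qed simp

lemma list_code_rev_step_funpow:
  "length l \<le> k \<Longrightarrow> (list_code_rev_step ^^ k) (prod_encode (list_encode l, list_encode acc)) =
     prod_encode (0, list_encode (rev l @ acc))"
proof (induction l arbitrary: k acc)
  case Nil
  show ?case by (induction k) (auto simp: list_code_rev_step_def)
next
  case (Cons a l)
  then obtain k' where k: "k = Suc k'" "length l \<le> k'" by (cases k) auto
  have "list_code_rev_step (prod_encode (list_encode (a # l), list_encode acc)) =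
        prod_encode (list_encode l, list_encode (a # acc))"
    by (simp add: list_code_rev_step_def list_code_hd_Cons list_code_tl_Cons del: list_encode.simps(2))
      simp
  then show ?case
    using Cons.IH[of k' "a # acc"] k by (simp add: funpow_swap1 del: list_encode.simps(2))
qed

lemma list_code_rev_list_encode [simp]: "list_code_rev (list_encode l) = list_encode (rev l)"
  unfolding list_code_rev_def using list_code_rev_step_funpow[OF length_le_list_encode, of l "[]"] by simp

lemma rec_computable_list_code_rev:
  assumes f: "rec_computable A k f"
  shows "rec_computable A k (\<lambda>xs. list_code_rev (f xs))"
proof -
  have step: "rec_computable A k' (\<lambda>xs. list_code_rev_step (g xs))" if "rec_computable A k' g" for k' g
    unfolding list_code_rev_step_def using that
    by (intro rec_computable_If rec_decidable_eq rec_computable_fst_prod_decode rec_computable_snd_prod_decode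
        rec_computable_prod_encode rec_computable_list_code_tl rec_computable_list_code_hd
        rec_computable_Suc rec_computable_const)
  have "rec_computable A k (\<lambda>xs. rec_nat (prod_encode (f xs, 0)) (\<lambda>m r. (\<lambda>m r xs. list_code_rev_step r) m r xs) (f xs))"
    by (intro rec_computable_rec_nat[OF _ _ f] rec_computable_prod_encode rec_computable_const
        step[where g = "\<lambda>ys. ys!1"] rec_computable_proj f) auto
  moreover have "rec_nat a (\<lambda>m r. g r) n = (g ^^ n) a" for a n and g :: "nat \<Rightarrow> nat"
    by (induction n) auto
  ultimately show ?thesis unfolding list_code_rev_def by (intro rec_computable_snd_prod_decode) simp
qed

section \<open>The halting problem\<close>

lemma encode_inject: "encode c1 = encode c2 \<Longrightarrow> c1 = c2"
proof (induction c1 arbitrary: c2)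
  case (Cn f gs)
  then show ?case
  proof (cases c2)
    case (Cn f' gs')
    with Cn.prems have e: "encode f = encode f'" "map encode gs = map encode gs'"
      by (auto simp: list_encode_eq)
    have "f = f'" using Cn.IH(1) e(1) by blast
    moreover have "gs = gs'" using Cn.IH(2) e(2)
      by (induction gs arbitrary: gs') (auto simp: Cons_eq_map_conv)
    ultimately show ?thesis using Cn by simp
  qed auto
qed (case_tac c2; auto)+

lemma halting_encode_iff: "halting (encode c) \<longleftrightarrow> (\<exists>r. ev (\<lambda>_. False) c [encode c] r)"
  unfolding halting_def using encode_inject by blast

lemma halting_undecidable: "\<not> computable_in (\<lambda>_. False) (\<lambda>x. if halting x then 1 else 0)"
proof
  assume "computable_in (\<lambda>_. False) (\<lambda>x. if halting x then 1 else 0)"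
  then obtain h where h: "\<And>x. ev (\<lambda>_. False) h [x] (if halting x then 1 else 0)"
    unfolding computable_in_def by blast
  define D where "D = Mn (Cn h [Proj 1])"
  have total: "ev (\<lambda>_. False) (Cn h [Proj 1]) (s # [e]) (if halting e then 1 else 0)" for s e
    unfolding ev_Cn_iff by (intro exI[of _ "[e]"]) (auto simp: ev_Proj_iff h)
  have "(\<exists>r. ev (\<lambda>_. False) D [e] r) \<longleftrightarrow> \<not> halting e" for e
    unfolding D_def using ev_Mn_total_iff[OF total] by simp
  from this[of "encode D"] show False unfolding halting_encode_iff[symmetric] by blast
qed

lemma rec_computable_encode_const_code:
  assumes f: "rec_computable A k f"
  shows "rec_computable A k (\<lambda>xs. encode (const_code (f xs)))"
proof -
  have "rec_computable A k (\<lambda>xs. rec_nat (prod_encode (0, 0))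
          (\<lambda>m r. (\<lambda>m r xs. prod_encode (4, prod_encode (prod_encode (1, 0), Suc (prod_encode (r, 0))))) m r xs) (f xs))"
    by (rule rec_computable_rec_nat[OF rec_computable_const _ f])
      (intro rec_computable_prod_encode rec_computable_Suc rec_computable_proj rec_computable_const, simp)
  moreover have "encode (const_code n) = rec_nat (prod_encode (0, 0))
      (\<lambda>m r. prod_encode (4, prod_encode (prod_encode (1, 0), Suc (prod_encode (r, 0))))) n" for n
    by (induction n) auto
  ultimately show ?thesis by simp
qed

lemma exists_decidable_reduces_to_halting:
  assumes P: "rec_decidable (\<lambda>_. False) 4 (\<lambda>ys. P (ys!0) (ys!1) (ys!2) (ys!3))"
  shows "\<exists>F. (\<forall>A. rec_computable A 3 (\<lambda>xs. F (xs!0) (xs!1) (xs!2))) \<and>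
             (\<forall>x y z. halting (F x y z) \<longleftrightarrow> (\<exists>s. P s x y z))"
proof -
  have "rec_computable (\<lambda>_. False) 4 (\<lambda>ys. if P (ys!0) (ys!1) (ys!2) (ys!3) then 0 else 1)"
    using P by (intro rec_computable_If rec_computable_const)
  then obtain c where c: "\<And>ys. length ys = 4 \<Longrightarrow>
      ev (\<lambda>_. False) c ys (if P (ys!0) (ys!1) (ys!2) (ys!3) then 0 else 1)"
    unfolding rec_computable_def by blast
  define Q where "Q x y z = Mn (Cn c [Proj 0, const_code x, const_code y, const_code z])" for x y z
  define F where "F x y z = encode (Q x y z)" for x y z
  have total: "ev (\<lambda>_. False) (Cn c [Proj 0, const_code x, const_code y, const_code z]) (s # [e])
      (if P s x y z then 0 else 1)" for s e x y z
    unfolding ev_Cn_iff using c[of "[s, x, y, z]"]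
    by (intro exI[of _ "[s, x, y, z]"]) (auto simp: ev_Proj_iff ev_const_code numeral_eq_Suc)
  have "halting (F x y z) \<longleftrightarrow> (\<exists>s. P s x y z)" for x y z
    unfolding F_def halting_encode_iff Q_def using ev_Mn_total_iff[OF total] by simp
  moreover have "rec_computable A 3 (\<lambda>xs. F (xs!0) (xs!1) (xs!2))" for A
    unfolding F_def Q_def
    by (simp, intro rec_computable_prod_encode rec_computable_Suc rec_computable_const
        rec_computable_encode_const_code rec_computable_proj) auto
  ultimately show ?thesis by blast
qed

lemma ce_in_fixpoints:
  assumes F: "rec_computable A 1 (\<lambda>xs. F (xs!0))"
  shows "ce_in A {x. x = F x}"
proof -
  have "rec_computable A 2 (\<lambda>ys. if ys!1 = F (ys!1) then 0 else 1)"
    by (intro rec_computable_If rec_decidable_eq rec_computable_proj rec_computable_const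
        rec_computable_compose1[OF F]) auto
  then obtain c where c: "\<And>ys. length ys = 2 \<Longrightarrow> ev A c ys (if ys!1 = F (ys!1) then 0 else 1)"
    unfolding rec_computable_def by blast
  have total: "ev A c (s # [x]) (if x = F x then 0 else 1)" for s x using c[of "[s, x]"] by simp
  show ?thesis unfolding ce_in_def
    by (intro exI[of _ "Mn c"] allI) (simp add: ev_Mn_total_iff[OF total])
qed

lemma pbits_0_1: "p = 0 \<or> p = 1 \<Longrightarrow> pbits p = (\<lambda>_. False)"
proof
  fix n assume "p = 0 \<or> p = 1"
  moreover have "\<lfloor>(2::real) ^ Suc n\<rfloor> = 2 ^ Suc n" by (metis floor_of_int of_int_numeral of_int_power)
  ultimately show "pbits p n = False" unfolding pbits_def by auto
qed

definition dyadic_floor :: "real \<Rightarrow> nat \<Rightarrow> nat" where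
  "dyadic_floor p n = rec_nat 0 (\<lambda>m r. 2 * r + (if pbits p m then 1 else 0)) n"

lemma dyadic_floor_eq:
  assumes "0 \<le> p" "p < 1"
  shows "int (dyadic_floor p n) = \<lfloor>p * 2 ^ n\<rfloor>"
proof (induction n)
  case 0 then show ?case using assms by (simp add: dyadic_floor_def floor_eq_iff)
next
  case (Suc n)
  have half: "\<lfloor>p * 2 ^ n\<rfloor> = \<lfloor>p * 2 ^ Suc n\<rfloor> div 2"
    using floor_divide_real_eq_div[of 2 "p * 2 ^ Suc n"] by simp
  have "int (dyadic_floor p (Suc n)) = 2 * int (dyadic_floor p n) + (if pbits p n then 1 else 0)"
    by (simp add: dyadic_floor_def)
  also have "\<dots> = 2 * (\<lfloor>p * 2 ^ Suc n\<rfloor> div 2) + \<lfloor>p * 2 ^ Suc n\<rfloor> mod 2"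
    unfolding Suc half pbits_def by (auto simp: odd_iff_mod_2_eq_one even_iff_mod_2_eq_zero)
  finally show ?case by simp
qed

lemma rec_computable_dyadic_floor:
  assumes f: "rec_computable (pbits p) k f"
  shows "rec_computable (pbits p) k (\<lambda>xs. dyadic_floor p (f xs))"
proof -
  have bit: "rec_computable (pbits p) (Suc (Suc k)) (\<lambda>ys. if pbits p (ys!0) then 1 else 0)"
    by (rule rec_computable_compose1[OF rec_computable_oracle]) (rule rec_computable_proj, simp)
  have "rec_computable (pbits p) k (\<lambda>xs. rec_nat 0
          (\<lambda>m r. (\<lambda>m r xs. 2 * r + (if pbits p m then 1 else 0)) m r xs) (f xs))"
    by (rule rec_computable_rec_nat[OF rec_computable_const _ f])
      (simp, intro rec_computable_add rec_computable_mult rec_computable_const rec_computable_proj bit, simp)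
  then show ?thesis unfolding dyadic_floor_def by simp
qed

definition bit_prob :: "real \<Rightarrow> bool \<Rightarrow> real" where
  "bit_prob p b = (if b then 1 - p else p)"

definition bit_weight :: "real \<Rightarrow> nat \<Rightarrow> bool \<Rightarrow> nat" where
  "bit_weight p n b = (if b then 2 ^ n - dyadic_floor p n else dyadic_floor p n + 1)"

lemma bit_weight_bounds:
  assumes "0 \<le> p" "p < 1"
  shows "bit_prob p b \<le> real (bit_weight p n b) / 2 ^ n"
    and "real (bit_weight p n b) / 2 ^ n \<le> bit_prob p b + (1/2) ^ n"
proof -
  define f where "f = real (dyadic_floor p n) / 2 ^ n"
  have floor: "real (dyadic_floor p n) = of_int \<lfloor>p * 2 ^ n\<rfloor>"
    using dyadic_floor_eq[OF assms, of n] by (metis of_int_of_nat_eq)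
  have lower: "real (dyadic_floor p n) \<le> p * 2 ^ n" and upper: "p * 2 ^ n - 1 < real (dyadic_floor p n)"
    unfolding floor by linarith+
  have "f \<le> p" unfolding f_def using lower by (simp add: divide_le_eq)
  moreover have "p - (1/2) ^ n = (p * 2 ^ n - 1) / 2 ^ n"
    by (simp add: diff_divide_distrib power_one_over)
  then have "p - (1/2) ^ n < f" unfolding f_def using upper by (simp add: divide_strict_right_mono)
  ultimately have f: "f \<le> p" "p - (1/2) ^ n < f" by blast+
  have "real (dyadic_floor p n) \<le> 2 ^ n"
    using lower assms
    by (smt (verit) mult_left_le_one_le zero_le_power)
  then have "real (bit_weight p n b) / 2 ^ n = (if b then 1 - f else f + (1/2) ^ n)"
    unfolding bit_weight_def f_def by (auto simp: of_nat_diff field_simps)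
  with f show "bit_prob p b \<le> real (bit_weight p n b) / 2 ^ n"
    and "real (bit_weight p n b) / 2 ^ n \<le> bit_prob p b + (1/2) ^ n"
    unfolding bit_prob_def by auto
qed

lemma rec_computable_bit_weight:
  "rec_computable (pbits p) k f \<Longrightarrow> rec_computable (pbits p) k (\<lambda>xs. bit_weight p (f xs) b)"
  unfolding bit_weight_def
  by (cases b) (simp_all add: rec_computable_diff rec_computable_power2 rec_computable_Suc
      rec_computable_dyadic_floor rec_computable_const)

lemma mu_snoc: "mu p (\<sigma> @ [b]) = mu p \<sigma> * bit_prob p b"
  unfolding mu_def bit_prob_def by auto

lemma mu_pos: "0 < p \<Longrightarrow> p < 1 \<Longrightarrow> 0 < mu p \<sigma>"
  unfolding mu_def by auto

lemma mu_le_max_power: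
  assumes "0 \<le> p" "p \<le> 1"
  shows "mu p \<sigma> \<le> max p (1 - p) ^ length \<sigma>"
proof (induction \<sigma> rule: rev_induct)
  case (snoc b \<sigma>)
  have "mu p (\<sigma> @ [b]) = mu p \<sigma> * bit_prob p b" by (rule mu_snoc)
  also have "\<dots> \<le> max p (1 - p) ^ length \<sigma> * max p (1 - p)"
    using assms snoc.IH by (intro mult_mono) (auto simp: bit_prob_def mu_def)
  finally show ?case by (simp add: mult.commute)
qed (simp add: mu_def)

lemma code_str_snoc_gt: "code_str \<sigma> < code_str (\<sigma> @ [b])"
proof -
  have triangle_less: "triangle x < triangle y" if "x < y" for x y
    using that by (induction y) (auto simp: less_Suc_eq)
  have "prod_encode (x, y) < prod_encode (x, y')" if "y < y'" for x y y'
    using triangle_less[of "x + y" "x + y'"] that unfolding prod_encode_def by simp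
  then have "list_encode l < list_encode (l @ [v])" for l v
    by (induction l) auto
  then show ?thesis unfolding code_str_def by simp
qed

lemma left_ce_semimeasure_half_power_code: "left_ce_semimeasure (\<lambda>\<sigma>. (1/2) ^ code_str \<sigma>)"
proof -
  have "semimeasure (\<lambda>\<sigma>. (1/2) ^ code_str \<sigma>)"
    unfolding semimeasure_def
  proof (intro conjI allI)
    fix \<sigma>
    have "(1/2::real) ^ code_str (\<sigma> @ [b]) \<le> (1/2) ^ Suc (code_str \<sigma>)" for b
      using code_str_snoc_gt[of \<sigma> b] by (intro power_decreasing) auto
    from this[of False] this[of True]
    show "(1/2::real) ^ code_str (\<sigma> @ [False]) + (1/2) ^ code_str (\<sigma> @ [True]) \<le> (1/2) ^ code_str \<sigma>"
      by simp
  qed (auto simp: power_le_one)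
  moreover have "left_ce (\<lambda>\<sigma>. (1/2) ^ code_str \<sigma>)"
    unfolding left_ce_def
  proof (intro exI conjI allI)
    show "computable_in (\<lambda>_. False) (\<lambda>_. 1)" "computable_in (\<lambda>_. False) (\<lambda>_. 0)"
      unfolding computable_in_iff_rec_computable by (rule rec_computable_const)+
    show "computable_in (\<lambda>_. False) (\<lambda>x. 2 ^ fst (prod_decode x) - 1)"
      unfolding computable_in_iff_rec_computable
      by (intro rec_computable_diff rec_computable_power2 rec_computable_fst_prod_decode
          rec_computable_proj rec_computable_const) simp
    fix \<sigma>
    have "(real 1 - real 0) / real (Suc (2 ^ fst (prod_decode (prod_encode (code_str \<sigma>, s))) - 1)) =
        (1/2) ^ code_str \<sigma>" for s
      by (simp add: power_one_over of_nat_diff)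
    then show "let q = \<lambda>s. (real 1 - real 0) / real (Suc (2 ^ fst (prod_decode (prod_encode (code_str \<sigma>, s))) - 1))
      in incseq q \<and> q \<longlonglongrightarrow> (1/2) ^ code_str \<sigma>"
      unfolding Let_def by (simp add: incseq_def)
  qed
  ultimately show ?thesis unfolding left_ce_semimeasure_def by simp
qed

lemma universal_semimeasure_pos:
  assumes "universal_semimeasure M"
  shows "0 < M \<sigma>"
proof -
  have "\<forall>\<rho>. left_ce_semimeasure \<rho> \<longrightarrow> (\<exists>c>0. \<forall>\<sigma>. M \<sigma> \<ge> c * \<rho> \<sigma>)"
    using assms unfolding universal_semimeasure_def by blast
  from this[rule_format, OF left_ce_semimeasure_half_power_code]
  obtain c where "c > 0" "M \<sigma> \<ge> c * (1/2) ^ code_str \<sigma>" by blast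
  moreover from \<open>c > 0\<close> have "0 < c * (1/2) ^ code_str \<sigma>" by simp
  ultimately show ?thesis by linarith
qed

lemma less_incseq_limit_iff:
  fixes q :: "nat \<Rightarrow> real"
  assumes "incseq q" "q \<longlonglongrightarrow> L"
  shows "c < L \<longleftrightarrow> (\<exists>s. c < q s)"
proof
  assume "c < L"
  then have "\<forall>\<^sub>F s in sequentially. c < q s" using assms(2) order_tendstoD(1) by blast
  then show "\<exists>s. c < q s" by (metis eventually_sequentially order_refl)
next
  assume "\<exists>s. c < q s"
  moreover have "q s \<le> L" for s using assms by (blast intro: incseq_le)
  ultimately show "c < L" by (meson less_le_trans)
qed

lemma left_ce_dyadic_lower_bounds_reduce_to_halting:
  assumes "left_ce M"
  shows "\<exists>F. (\<forall>A. rec_computable A 3 (\<lambda>xs. F (xs!0) (xs!1) (xs!2))) \<and>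
             (\<forall>\<sigma> N E. halting (F (code_str \<sigma>) N E) \<longleftrightarrow> real N / 2 ^ E < M \<sigma>)"
proof -
  obtain a b d where computable: "computable_in (\<lambda>_. False) a" "computable_in (\<lambda>_. False) b"
      "computable_in (\<lambda>_. False) d"
    and approx: "\<And>\<sigma>. let q = (\<lambda>s. (real (a (prod_encode (code_str \<sigma>, s))) - real (b (prod_encode (code_str \<sigma>, s))))
                      / real (Suc (d (prod_encode (code_str \<sigma>, s))))) in incseq q \<and> q \<longlonglongrightarrow> M \<sigma>"
    using assms unfolding left_ce_def by blast
  define P where "P s c N E \<longleftrightarrow> N * Suc (d (prod_encode (c, s))) + b (prod_encode (c, s)) * 2 ^ E
      < a (prod_encode (c, s)) * 2 ^ E" for s c N E :: nat
  have "rec_decidable (\<lambda>_. False) 4 (\<lambda>ys. P (ys!0) (ys!1) (ys!2) (ys!3))"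
    unfolding P_def
    by (intro rec_decidable_less rec_computable_add rec_computable_mult rec_computable_Suc
        rec_computable_power2 rec_computable_computable_in[OF computable(1)]
        rec_computable_computable_in[OF computable(2)] rec_computable_computable_in[OF computable(3)]
        rec_computable_prod_encode rec_computable_proj) auto
  then obtain F where F: "\<forall>A. rec_computable A 3 (\<lambda>xs. F (xs!0) (xs!1) (xs!2))"
    "\<forall>c N E. halting (F c N E) \<longleftrightarrow> (\<exists>s. P s c N E)"
    using exists_decidable_reduces_to_halting by blast
  define q where "q \<sigma> s = (real (a (prod_encode (code_str \<sigma>, s))) - real (b (prod_encode (code_str \<sigma>, s))))
      / real (Suc (d (prod_encode (code_str \<sigma>, s))))" for \<sigma> s
  have "P s (code_str \<sigma>) N E \<longleftrightarrow> real N / 2 ^ E < q \<sigma> s" for s \<sigma> N E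
  proof -
    define z where "z = prod_encode (code_str \<sigma>, s)"
    have "P s (code_str \<sigma>) N E \<longleftrightarrow> real N * real (Suc (d z)) + real (b z) * 2 ^ E < real (a z) * 2 ^ E"
      unfolding P_def z_def[symmetric]
      by (metis (mono_tags, opaque_lifting) of_nat_add of_nat_less_iff of_nat_mult of_nat_numeral of_nat_power)
    also have "\<dots> \<longleftrightarrow> real N / 2 ^ E < (real (a z) - real (b z)) / real (Suc (d z))"
      by (simp add: field_simps del: of_nat_Suc)
    finally show ?thesis unfolding z_def q_def .
  qed
  moreover have "real N / 2 ^ E < M \<sigma> \<longleftrightarrow> (\<exists>s. real N / 2 ^ E < q \<sigma> s)" for \<sigma> N E
    using approx[of \<sigma>] less_incseq_limit_iff unfolding Let_def q_def[abs_def] by blast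
  ultimately have "halting (F (code_str \<sigma>) N E) \<longleftrightarrow> real N / 2 ^ E < M \<sigma>" for \<sigma> N E
    using F(2) by simp
  with F(1) show ?thesis by blast
qed

section \<open>The greedy sequence\<close>

text \<open>The state after \<open>n\<close> steps is a string \<open>\<sigma>\<close> of length \<open>n\<close> and a budget
  \<open>T / 2 ^ budget_exponent n\<close> bounding \<open>M \<sigma>\<close>. The next bit is \<open>1\<close> exactly when
  \<open>M (\<sigma> @ [0])\<close> exceeds the share of the budget reserved for \<open>0\<close>; either way \<open>M\<close> stays below
  the budget, which is multiplied by a dyadic upper approximation of the probability of the chosen bit.\<close>

definition budget_exponent :: "nat \<Rightarrow> nat" where
  "budget_exponent n = triangle n - n"

lemma budget_exponent_Suc: "budget_exponent (Suc n) = budget_exponent n + n"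
proof -
  have "n \<le> triangle n" by (induction n) auto
  then show ?thesis unfolding budget_exponent_def by simp
qed

fun greedy_step :: "(bstring \<Rightarrow> real) \<Rightarrow> real \<Rightarrow> nat \<Rightarrow> bstring \<times> nat \<Rightarrow> bstring \<times> nat" where
  "greedy_step M p n (\<sigma>, T) =
     (let b = real (T * bit_weight p n False) / 2 ^ (budget_exponent n + n) < M (\<sigma> @ [False])
      in (\<sigma> @ [b], T * bit_weight p n b))"

definition greedy :: "(bstring \<Rightarrow> real) \<Rightarrow> real \<Rightarrow> nat \<Rightarrow> bstring \<times> nat" where
  "greedy M p n = rec_nat ([], 1) (greedy_step M p) n"

definition greedy_prefix :: "(bstring \<Rightarrow> real) \<Rightarrow> real \<Rightarrow> nat \<Rightarrow> bstring" where
  "greedy_prefix M p n = fst (greedy M p n)"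

definition greedy_budget :: "(bstring \<Rightarrow> real) \<Rightarrow> real \<Rightarrow> nat \<Rightarrow> real" where
  "greedy_budget M p n = real (snd (greedy M p n)) / 2 ^ budget_exponent n"

definition greedy_seq :: "(bstring \<Rightarrow> real) \<Rightarrow> real \<Rightarrow> nat \<Rightarrow> bool" where
  "greedy_seq M p n =
     (greedy_budget M p n * (real (bit_weight p n False) / 2 ^ n) < M (greedy_prefix M p n @ [False]))"

lemma greedy_seq_iff:
  "greedy_seq M p n \<longleftrightarrow>
     real (snd (greedy M p n) * bit_weight p n False) / 2 ^ (budget_exponent n + n)
       < M (greedy_prefix M p n @ [False])"
  unfolding greedy_seq_def greedy_budget_def by (simp add: power_add)

lemma greedy_Suc_eq:
  "greedy M p (Suc n) = (greedy_prefix M p n @ [greedy_seq M p n],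
     snd (greedy M p n) * bit_weight p n (greedy_seq M p n))"
proof -
  obtain \<sigma> T where st: "greedy M p n = (\<sigma>, T)" by fastforce
  have "greedy M p (Suc n) = greedy_step M p n (greedy M p n)"
    by (simp add: greedy_def)
  then show ?thesis
    unfolding greedy_seq_iff greedy_prefix_def st by (simp add: Let_def)
qed

lemma greedy_prefix_0 [simp]: "greedy_prefix M p 0 = []"
  by (simp add: greedy_prefix_def greedy_def)

lemma greedy_prefix_Suc: "greedy_prefix M p (Suc n) = greedy_prefix M p n @ [greedy_seq M p n]"
  using greedy_Suc_eq by (simp add: greedy_prefix_def)

lemma greedy_budget_Suc:
  "greedy_budget M p (Suc n) = greedy_budget M p n * (real (bit_weight p n (greedy_seq M p n)) / 2 ^ n)"
  unfolding greedy_budget_def greedy_Suc_eq by (simp add: budget_exponent_Suc power_add)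

lemma prefix_greedy_seq: "prefix (greedy_seq M p) n = greedy_prefix M p n"
  by (induction n) (simp_all add: prefix_def greedy_prefix_Suc)

lemma semimeasure_greedy_le_budget:
  assumes sm: "semimeasure M" and p: "0 \<le> p" "p < 1"
  shows "M (greedy_prefix M p n) \<le> greedy_budget M p n"
proof (induction n)
  case 0
  then show ?case using sm
    by (simp add: semimeasure_def greedy_prefix_def greedy_budget_def greedy_def budget_exponent_def)
next
  case (Suc n)
  define \<sigma> where "\<sigma> = greedy_prefix M p n"
  define t where "t = greedy_budget M p n"
  define w where "w b = real (bit_weight p n b) / 2 ^ n" for b
  have "0 \<le> t" unfolding t_def greedy_budget_def by simp
  have split: "M (\<sigma> @ [False]) + M (\<sigma> @ [True]) \<le> M \<sigma>" using sm unfolding semimeasure_def by blast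
  show ?case
  proof (cases "greedy_seq M p n")
    case True
    then have "t * w False < M (\<sigma> @ [False])"
      unfolding greedy_seq_def \<sigma>_def t_def w_def .
    moreover have "t * p \<le> t * w False" "t * (1 - p) \<le> t * w True"
      using bit_weight_bounds(1)[OF p] \<open>0 \<le> t\<close> unfolding w_def bit_prob_def
      by (metis mult_left_mono)+
    ultimately have "M (\<sigma> @ [True]) \<le> t * w True"
      using split Suc.IH unfolding \<sigma>_def[symmetric] t_def[symmetric] by (simp add: algebra_simps)
    then show ?thesis
      using True unfolding greedy_prefix_Suc greedy_budget_Suc \<sigma>_def t_def w_def by simp
  next
    case False
    then show ?thesis unfolding greedy_prefix_Suc greedy_budget_Suc greedy_seq_def by simp
  qed
qed

lemma greedy_budget_le_mu:
  assumes p: "0 < p" "p < 1"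
  shows "greedy_budget M p n \<le> exp ((\<Sum>i<n. (1/2) ^ i) / min p (1 - p)) * mu p (greedy_prefix M p n)"
proof (induction n)
  case 0
  then show ?case by (simp add: greedy_budget_def greedy_prefix_def greedy_def budget_exponent_def mu_def)
next
  case (Suc n)
  define \<delta> where "\<delta> = min p (1 - p)"
  define b where "b = greedy_seq M p n"
  define x where "x = (1/2::real) ^ n"
  define K where "K = exp ((\<Sum>i<n. (1/2::real) ^ i) / \<delta>)"
  have "0 < \<delta>" "\<delta> \<le> bit_prob p b" using p unfolding \<delta>_def bit_prob_def by auto
  have weight: "real (bit_weight p n b) / 2 ^ n \<le> bit_prob p b * exp (x / \<delta>)"
  proof -
    have "real (bit_weight p n b) / 2 ^ n \<le> bit_prob p b + x"
      using bit_weight_bounds(2) p unfolding x_def by simp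
    also have "\<dots> \<le> bit_prob p b * (1 + x / \<delta>)"
      using \<open>0 < \<delta>\<close> \<open>\<delta> \<le> bit_prob p b\<close> unfolding x_def
      by (simp add: field_simps mult_right_mono)
    also have "\<dots> \<le> bit_prob p b * exp (x / \<delta>)"
      using \<open>0 < \<delta>\<close> \<open>\<delta> \<le> bit_prob p b\<close> by (intro mult_left_mono) (auto simp: exp_ge_add_one_self add.commute)
    finally show ?thesis .
  qed
  have "greedy_budget M p (Suc n) = greedy_budget M p n * (real (bit_weight p n b) / 2 ^ n)"
    unfolding b_def by (rule greedy_budget_Suc)
  also have "\<dots> \<le> K * mu p (greedy_prefix M p n) * (bit_prob p b * exp (x / \<delta>))"
    using Suc.IH weight unfolding K_def \<delta>_def
    using mu_pos[OF p, of "greedy_prefix M p n"]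
    by (intro mult_mono) (auto simp: greedy_budget_def)
  also have "\<dots> = exp ((\<Sum>i<Suc n. (1/2) ^ i) / \<delta>) * mu p (greedy_prefix M p (Suc n))"
    unfolding K_def x_def b_def greedy_prefix_Suc mu_snoc by (simp add: add_divide_distrib exp_add)
  finally show ?case unfolding \<delta>_def .
qed

lemma semimeasure_greedy_le_mu:
  assumes sm: "semimeasure M" and p: "0 < p" "p < 1"
  shows "M (greedy_prefix M p n) \<le> exp (2 / min p (1 - p)) * mu p (greedy_prefix M p n)"
proof -
  have "(\<Sum>i<n. (1/2::real) ^ i) = 2 - 2 * (1/2) ^ n"
    by (induction n) auto
  then have "(\<Sum>i<n. (1/2::real) ^ i) \<le> 2" by simp
  then have "exp ((\<Sum>i<n. (1/2::real) ^ i) / min p (1 - p)) \<le> exp (2 / min p (1 - p))"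
    using p by (simp add: divide_right_mono)
  then have "exp ((\<Sum>i<n. (1/2) ^ i) / min p (1 - p)) * mu p (greedy_prefix M p n)
      \<le> exp (2 / min p (1 - p)) * mu p (greedy_prefix M p n)"
    using mu_pos[OF p] by (simp add: less_imp_le mult_right_mono)
  then show ?thesis
    using semimeasure_greedy_le_budget[OF sm] greedy_budget_le_mu[OF p] p by (meson less_imp_le order_trans)
qed

definition bit_code :: "bool \<Rightarrow> nat" where
  "bit_code b = (if b then 1 else 0)"

lemma code_str_bit_code: "code_str \<sigma> = list_encode (map bit_code \<sigma>)"
  unfolding code_str_def bit_code_def ..

text \<open>The greedy state is coded with the string reversed, so that appending a bit is a
  \<open>list_encode\<close>-cons.\<close>

definition greedy_code :: "(bstring \<Rightarrow> real) \<Rightarrow> real \<Rightarrow> nat \<Rightarrow> nat" where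
  "greedy_code M p n =
     prod_encode (list_encode (map bit_code (rev (greedy_prefix M p n))), snd (greedy M p n))"

definition greedy_code_step :: "(nat \<Rightarrow> nat \<Rightarrow> nat \<Rightarrow> nat) \<Rightarrow> real \<Rightarrow> nat \<Rightarrow> nat \<Rightarrow> nat" where
  "greedy_code_step F p n r =
     (if halting (F (list_code_rev (Suc (prod_encode (0, fst (prod_decode r)))))
                    (snd (prod_decode r) * bit_weight p n False) (budget_exponent n + n))
      then prod_encode (Suc (prod_encode (1, fst (prod_decode r))), snd (prod_decode r) * bit_weight p n True)
      else prod_encode (Suc (prod_encode (0, fst (prod_decode r))), snd (prod_decode r) * bit_weight p n False))"

lemma greedy_code_Suc:
  assumes F: "\<And>\<sigma> N E. halting (F (code_str \<sigma>) N E) \<longleftrightarrow> real N / 2 ^ E < M \<sigma>"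
  shows "greedy_code M p (Suc n) = greedy_code_step F p n (greedy_code M p n)"
proof -
  define \<sigma> where "\<sigma> = greedy_prefix M p n"
  have rev:
    "list_code_rev (Suc (prod_encode (0, list_encode (map bit_code (rev \<sigma>))))) = code_str (\<sigma> @ [False])"
    using list_code_rev_list_encode[of "0 # map bit_code (rev \<sigma>)"]
    by (simp add: code_str_bit_code bit_code_def rev_map)
  show ?thesis
    unfolding greedy_code_def greedy_code_step_def greedy_Suc_eq greedy_prefix_Suc greedy_seq_iff
      \<sigma>_def[symmetric]
    by (simp add: rev F bit_code_def)
qed

lemma rec_computable_greedy_prefix:
  assumes "left_ce M" and halting_le: "turing_le halting (pbits p)"
  shows "rec_computable (pbits p) 1 (\<lambda>xs. code_str (greedy_prefix M p (xs!0)))"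
proof -
  obtain F where F_computable: "\<And>A. rec_computable A 3 (\<lambda>xs. F (xs!0) (xs!1) (xs!2))"
    and F: "\<And>\<sigma> N E. halting (F (code_str \<sigma>) N E) \<longleftrightarrow> real N / 2 ^ E < M \<sigma>"
    using left_ce_dyadic_lower_bounds_reduce_to_halting[OF assms(1)] by blast
  have "rec_decidable (pbits p) (Suc (Suc 1)) (\<lambda>ys.
      halting (F (list_code_rev (Suc (prod_encode (0, fst (prod_decode (ys!1))))))
                 (snd (prod_decode (ys!1)) * bit_weight p (ys!0) False) (budget_exponent (ys!0) + ys!0)))"
    unfolding rec_decidable_def budget_exponent_def
    by (intro rec_computable_computable_in[OF halting_le[unfolded turing_le_def]]
        rec_computable_compose3[OF F_computable] rec_computable_list_code_rev rec_computable_Suc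
        rec_computable_prod_encode rec_computable_fst_prod_decode rec_computable_snd_prod_decode
        rec_computable_mult rec_computable_bit_weight rec_computable_add rec_computable_diff
        rec_computable_triangle rec_computable_proj rec_computable_const) auto
  then have "rec_computable (pbits p) (Suc (Suc 1)) (\<lambda>ys. greedy_code_step F p (ys!0) (ys!1))"
    unfolding greedy_code_step_def
    by (intro rec_computable_If rec_computable_prod_encode rec_computable_Suc rec_computable_mult
        rec_computable_fst_prod_decode rec_computable_snd_prod_decode rec_computable_bit_weight
        rec_computable_proj rec_computable_const) auto
  then have "rec_computable (pbits p) 1
      (\<lambda>xs. rec_nat (prod_encode (0, 1)) (\<lambda>m r. (\<lambda>m r xs. greedy_code_step F p m r) m r xs) (xs!0))"
    by (intro rec_computable_rec_nat rec_computable_const rec_computable_proj) auto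
  moreover have "greedy_code M p n = rec_nat (prod_encode (0, 1)) (greedy_code_step F p) n" for n
    by (induction n)
      (simp_all add: greedy_code_Suc[where F = F, OF F], simp add: greedy_code_def greedy_def)
  moreover have "code_str (greedy_prefix M p n) = list_code_rev (fst (prod_decode (greedy_code M p n)))" for n
    unfolding greedy_code_def by (simp add: code_str_bit_code rev_map)
  ultimately show ?thesis
    by (simp, intro rec_computable_list_code_rev rec_computable_fst_prod_decode)
qed

lemma computable_not_mlr:
  assumes p: "0 < p" "p < 1"
    and y: "rec_computable (pbits p) 1 (\<lambda>xs. code_str (prefix y (xs!0)))"
  shows "y \<notin> mlr p"
proof -
  define mx where "mx = max p (1 - p)"
  have "mx < 1" "0 \<le> mx" unfolding mx_def using p by auto
  then obtain m where m: "mx ^ m < 1/2" using real_arch_pow_inv[of "1/2" mx] by auto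
  define U where "U k = {prefix y (m * k)}" for k
  define F where
    "F x = prod_encode (fst (prod_decode x), code_str (prefix y (m * fst (prod_decode x))))" for x
  have "{prod_encode (k, code_str \<sigma>) | k \<sigma>. \<sigma> \<in> U k} = {x. x = F x}"
    unfolding U_def F_def by (auto simp: prod_decode_inverse)
  moreover have "rec_computable (pbits p) 1 (\<lambda>xs. F (xs!0))"
    unfolding F_def
    by (intro rec_computable_prod_encode rec_computable_fst_prod_decode rec_computable_mult
        rec_computable_compose1[OF y] rec_computable_proj rec_computable_const) auto
  ultimately have "ce_in (pbits p) {prod_encode (k, code_str \<sigma>) | k \<sigma>. \<sigma> \<in> U k}"
    using ce_in_fixpoints by simp
  moreover have "open_measure_le p (U k) ((1/2) ^ k)" for k
    unfolding open_measure_le_def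
  proof (intro allI impI)
    fix S :: "bstring set" assume "finite S" "S \<subseteq> U k" "prefix_free S"
    then have "S = {} \<or> S = {prefix y (m * k)}" unfolding U_def by blast
    then have "(\<Sum>\<sigma>\<in>S. mu p \<sigma>) \<le> mu p (prefix y (m * k))" using mu_pos[OF p] by (auto intro: less_imp_le)
    also have "\<dots> \<le> (mx ^ m) ^ k"
      using mu_le_max_power[of p "prefix y (m * k)"] p unfolding mx_def prefix_def
      by (simp add: power_mult)
    also have "\<dots> \<le> (1/2) ^ k" using m \<open>0 \<le> mx\<close> by (intro power_mono) auto
    finally show "(\<Sum>\<sigma>\<in>S. mu p \<sigma>) \<le> (1/2) ^ k" .
  qed
  ultimately have "martin_loef_test p U" unfolding martin_loef_test_def by blast
  moreover have "\<forall>k. \<exists>n. prefix y n \<in> U k" unfolding U_def by blast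
  ultimately show ?thesis unfolding mlr_def by blast
qed

lemma KA_ge_of_le_mu:
  assumes "0 < M \<sigma>" "0 < mu p \<sigma>" "0 < K" "M \<sigma> \<le> K * mu p \<sigma>"
  shows "KA M \<sigma> \<ge> - log 2 (mu p \<sigma>) - log 2 K"
proof -
  have "log 2 (M \<sigma>) \<le> log 2 (K * mu p \<sigma>)" using assms by simp
  also have "\<dots> = log 2 K + log 2 (mu p \<sigma>)" using assms by (simp add: log_mult_pos)
  finally show ?thesis unfolding KA_def by linarith
qed

theorem mainTheorem16:
  fixes p :: real and M :: "bstring \<Rightarrow> real"
  assumes "universal_semimeasure M"
    and "0 \<le> p" and "p \<le> 1"
    and "turing_le halting (pbits p)"
  shows "\<exists>y. y \<notin> mlr p \<and>
           (\<exists>c::real. \<forall>n. KA M (prefix y n) \<ge> - log 2 (mu p (prefix y n)) - c)"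
proof -
  have p: "0 < p" "p < 1"
    using assms(2-4) pbits_0_1[of p] halting_undecidable unfolding turing_le_def by force+
  have M: "semimeasure M" "left_ce M"
    using assms(1) unfolding universal_semimeasure_def left_ce_semimeasure_def by auto
  define y where "y = greedy_seq M p"
  define K where "K = exp (2 / min p (1 - p))"
  have "y \<notin> mlr p"
    using computable_not_mlr[OF p, of y] rec_computable_greedy_prefix[OF M(2) assms(4)]
    unfolding y_def prefix_greedy_seq by blast
  moreover have "KA M (prefix y n) \<ge> - log 2 (mu p (prefix y n)) - log 2 K" for n
    unfolding y_def prefix_greedy_seq K_def
    using universal_semimeasure_pos[OF assms(1)] mu_pos[OF p] semimeasure_greedy_le_mu[OF M(1) p]
    by (intro KA_ge_of_le_mu) auto
  ultimately show ?thesis by blast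
qed

end
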